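(* Let $n>2$, let $K\subset\mathbb{R}^{n,+}$ be a bounded region with smooth boundary whose closure $\overline K$ lies in $\mathbb{R}^{n,+}$, and let $L\in C^1(\overline K)$ be $Cl_n$-valued. Define, for $y\in\mathbb{R}^{n,+}\setminus\overline K$, $$I(y)=y_n^{n-2}\left(\int_K E(x,y)L(x)\,dx^n-\int_K F(x,y)\hat L(x)\,dx^n\right).$$ Then $I$ is hypermonogenic on $\mathbb{R}^{n,+}\setminus\overline K$, i.e. $MI=0$ there.
   Context: $Cl_n$ is the real Clifford algebra generated by an orthonormal basis $e_1,\dots,e_n$ of $\mathbb{R}^n$ with $e_ie_j+e_je_i=-2\delta_{ij}$; vectors $x=\sum x_je_j$ are viewed in $Cl_n$, a nonzero vector has inverse $x^{-1}=-x/\|x\|^2$, $\|\cdot\|$ is the Euclidean norm, $\mathbb{R}^{n,+}=\{x:x_n>0\}$, and $dx^n$ is Lebesgue measure. $Cl_{n-1}$ is the subalgebra generated by $e_1,\dots,e_{n-1}$; each $A\in Cl_n$ is uniquely $A=B+Ce_n$ with $B,C\in Cl_{n-1}$, and $\hat A:=B-Ce_n$, $Q(A)=C$, $Q'(A)=-e_nQ(A)e_n$. For a vector $y$, $\hat y=y_1e_1+\dots+y_{n-1}e_{n-1}-y_ne_n$; $\hat L(x)=\widehat{L(x)}$. The kernels are $E(x,y)=\frac{(x-y)^{-1}}{\|x-y\|^{n-2}\|x-\hat y\|^{n-2}}$ and $F(x,y)=\frac{(\hat x-y)^{-1}}{\|x-y\|^{n-2}\|\hat x-y\|^{n-2}}$.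 The Dirac-Hodge operator is $Mf=\sum_{j=1}^ne_j\frac{\partial f}{\partial y_j}+\frac{n-2}{y_n}Q'(f)$, and $f$ is (left) hypermonogenic if $Mf=0$. *)

theory Defs
  imports "HOL-Analysis.Analysis"
begin

text \<open>The coordinate index type 'n is a finite linearly ordered type with CARD('n) = n;
  its elements play the role of 1..n, and the largest element plays the role of n.  The Clifford algebra Cl_n is represented by its
  coefficient vectors w.r.t. the blade basis e_A (A a subset of the index set),
  i.e. by real^('n set).\<close>

type_synonym 'n cl = "real ^ ('n set)"

definition lastidx :: "'n::{finite,linorder}" where
  "lastidx = Max UNIV"

definition blade :: "'n set \<Rightarrow> 'n::{finite,linorder} cl" where
  "blade A = (\<chi> C. if C = A then 1 else 0)"

definition cl_e :: "'n::{finite,linorder} \<Rightarrow> 'n cl" where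
  "cl_e i = blade {i}"

text \<open>Sign of e_A e_B = sign A B * e_(A symmetric-difference B), with e_i^2 = -1.\<close>
definition cl_sign :: "'n::{finite,linorder} set \<Rightarrow> 'n set \<Rightarrow> real" where
  "cl_sign A B = (-1) ^ (card {(i,j). i \<in> A \<and> j \<in> B \<and> j < i} + card (A \<inter> B))"

definition cl_mult :: "'n::{finite,linorder} cl \<Rightarrow> 'n cl \<Rightarrow> 'n cl" (infixl "\<odot>" 70) where
  "a \<odot> b = (\<chi> C. \<Sum>A\<in>UNIV. \<Sum>B\<in>UNIV.
      if (A - B) \<union> (B - A) = C then cl_sign A B * (a $ A) * (b $ B) else 0)"

definition cl_vec :: "real ^ ('n::{finite,linorder}) \<Rightarrow> 'n cl" where
  "cl_vec x = (\<Sum>i\<in>UNIV. (x $ i) *\<^sub>R cl_e i)"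

definition cl_vinv :: "real ^ ('n::{finite,linorder}) \<Rightarrow> 'n cl" where
  "cl_vinv x = cl_vec (- (1 / norm x ^ 2) *\<^sub>R x)"

text \<open>A = B + C e_n with B, C in Cl_(n-1); Q(A) = C, hat A = B - C e_n, Q'(A) = - e_n Q(A) e_n.\<close>
definition cl_Q :: "'n::{finite,linorder} cl \<Rightarrow> 'n cl" where
  "cl_Q a = (\<chi> D. if lastidx \<in> D then 0 else a $ (insert lastidx D))"

definition cl_B :: "'n::{finite,linorder} cl \<Rightarrow> 'n cl" where
  "cl_B a = (\<chi> D. if lastidx \<in> D then 0 else a $ D)"

definition cl_hat :: "'n::{finite,linorder} cl \<Rightarrow> 'n cl" where
  "cl_hat a = cl_B a - cl_Q a \<odot> cl_e lastidx"

definition cl_Q' :: "'n::{finite,linorder} cl \<Rightarrow> 'n cl" where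
  "cl_Q' a = - (cl_e lastidx \<odot> cl_Q a \<odot> cl_e lastidx)"

definition vhat :: "real ^ ('n::{finite,linorder}) \<Rightarrow> real ^ ('n::{finite,linorder})" where
  "vhat y = (\<chi> i. if i = lastidx then - (y $ i) else y $ i)"

definition upper_half :: "(real ^ ('n::{finite,linorder})) set" where
  "upper_half = {x. x $ lastidx > 0}"

definition kerE :: "real ^ ('n::{finite,linorder}) \<Rightarrow> real ^ ('n::{finite,linorder}) \<Rightarrow> 'n cl" where
  "kerE x y = (1 / (norm (x - y) ^ (CARD('n) - 2) * norm (x - vhat y) ^ (CARD('n) - 2)))
                *\<^sub>R cl_vinv (x - y)"

definition kerF :: "real ^ ('n::{finite,linorder}) \<Rightarrow> real ^ ('n::{finite,linorder}) \<Rightarrow> 'n cl" where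
  "kerF x y = (1 / (norm (x - y) ^ (CARD('n) - 2) * norm (vhat x - y) ^ (CARD('n) - 2)))
                *\<^sub>R cl_vinv (vhat x - y)"

definition pdiff :: "('n::finite) \<Rightarrow> (real ^ 'n \<Rightarrow> 'b::real_normed_vector) \<Rightarrow> real ^ 'n \<Rightarrow> 'b" where
  "pdiff j f y = vector_derivative (\<lambda>t. f (y + t *\<^sub>R axis j 1)) (at 0)"

definition has_partials_on :: "(real ^ ('n::finite) \<Rightarrow> 'b::real_normed_vector) \<Rightarrow> (real ^ 'n) set \<Rightarrow> bool" where
  "has_partials_on f S \<longleftrightarrow> (\<forall>y\<in>S. \<forall>j. (\<lambda>t. f (y + t *\<^sub>R axis j 1)) differentiable (at 0))"

fun Ck_on :: "nat \<Rightarrow> (real ^ ('n::finite)) set \<Rightarrow> (real ^ 'n \<Rightarrow> 'b::real_normed_vector) \<Rightarrow> bool" where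
  "Ck_on 0 S f = continuous_on S f"
| "Ck_on (Suc k) S f = (continuous_on S f \<and> has_partials_on f S \<and> (\<forall>j. Ck_on k S (pdiff j f)))"

definition smooth_on :: "(real ^ ('n::finite)) set \<Rightarrow> (real ^ 'n \<Rightarrow> real) \<Rightarrow> bool" where
  "smooth_on S f \<longleftrightarrow> (\<forall>k. Ck_on k S f)"

definition smooth_boundary :: "(real ^ ('n::finite)) set \<Rightarrow> bool" where
  "smooth_boundary K \<longleftrightarrow> (\<forall>p\<in>frontier K. \<exists>U \<phi>. open U \<and> p \<in> U \<and> smooth_on U \<phi> \<and>
      (\<exists>j. pdiff j \<phi> p \<noteq> 0) \<and> K \<inter> U = {x\<in>U. \<phi> x < 0})"

definition C1_closure :: "(real ^ ('n::finite)) set \<Rightarrow> (real ^ 'n \<Rightarrow> 'b::real_normed_vector) \<Rightarrow> bool" where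
  "C1_closure K f \<longleftrightarrow> continuous_on (closure K) f \<and> has_partials_on f K \<and>
      (\<forall>j. \<exists>g. continuous_on (closure K) g \<and> (\<forall>x\<in>K. pdiff j f x = g x))"

definition DH :: "(real ^ ('n::{finite,linorder}) \<Rightarrow> 'n cl) \<Rightarrow> real ^ ('n::{finite,linorder}) \<Rightarrow> 'n cl" where
  "DH f y = (\<Sum>j\<in>UNIV. cl_e j \<odot> pdiff j f y)
      + ((real CARD('n) - 2) / (y $ lastidx)) *\<^sub>R cl_Q' (f y)"

definition hypermonogenic_on :: "(real ^ ('n::{finite,linorder})) set \<Rightarrow> (real ^ ('n::{finite,linorder}) \<Rightarrow> 'n cl) \<Rightarrow> bool" where
  "hypermonogenic_on S f \<longleftrightarrow> Ck_on 1 S f \<and> (\<forall>y\<in>S. DH f y = 0)"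

end

theory Submission
  imports Defs
begin

text \<open>
  Fix x in the closure of K and A in Cl_n. Put a = (y - x)/|y - x|^2 and
  b = (y - hat x)/|y - hat x|^2. The integrand G(y) = y_n^(n-2) (E(x,y) A - F(x,y) hat A)
  equals phi U with the scalar weight phi = y_n^(n-2) / (|y - x| |y - hat x|)^(n-2) and
  U = a A - b hat A. In the Dirac part of M G, the derivatives of a and b contribute
  phi (-(n-2)/|y-x|^2 A + (n-2)/|y - hat x|^2 hat A), and the gradient of phi contributes
  (n-2) phi (e_n/y_n - a - b) U. The vectors y - x and y - hat x differ only in the last
  coordinate, and those coordinates sum to 2 y_n. So e_n (a - hat b) = 2 y_n b a and
  e_n (b - hat a) = 2 y_n a b, and with a^2 = -1/|y-x|^2 and b^2 = -1/|y - hat x|^2 these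
  identities make the term (n-2)/y_n Q'(G) cancel the rest. Hence G is hypermonogenic in y
  wherever y_n > 0 and y differs from x and hat x. Since the closure of K is compact and lies
  in the upper half space, G and its first derivatives are jointly continuous in (y, x).
  Differentiating under the integral sign then gives M I = 0.
\<close>

section \<open>Clifford multiplication\<close>

definition symdiff :: "'a set \<Rightarrow> 'a set \<Rightarrow> 'a set" where
  "symdiff A B = (A - B) \<union> (B - A)"

lemma symdiff_simps [simp]:
  "symdiff A (symdiff A B) = B" "symdiff (symdiff A B) B = A" "symdiff A {} = A" "symdiff {} A = A"
  unfolding symdiff_def by blast+

lemma symdiff_eq_iff: "symdiff A B = C \<longleftrightarrow> B = symdiff A C"
  unfolding symdiff_def by blast

lemma symdiff_assoc: "symdiff (symdiff A B) C = symdiff A (symdiff B C)"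
  unfolding symdiff_def by blast

lemma neg_one_power_card_symdiff:
  assumes "finite P" "finite R"
  shows "(-1::real) ^ card (symdiff P R) = (-1) ^ card P * (-1) ^ card R"
proof -
  have "symdiff P R = (P \<union> R) - (P \<inter> R)" "P \<inter> R \<subseteq> P \<union> R" unfolding symdiff_def by blast+
  then have "card (symdiff P R) + card (P \<inter> R) = card (P \<union> R)"
    using assms card_mono[of "P \<union> R" "P \<inter> R"] by (simp add: card_Diff_subset)
  then have "card P + card R = card (symdiff P R) + 2 * card (P \<inter> R)"
    using card_Un_Int[OF assms] by linarith
  then have "(-1::real) ^ (card P + card R) = (-1) ^ card (symdiff P R)"
    by (simp add: power_add power_mult)
  then show ?thesis by (simp add: power_add)
qed

lemma cl_sign_cocycle:
  fixes A B C :: "'n::{finite,linorder} set"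
  shows "cl_sign A B * cl_sign (symdiff A B) C = cl_sign A (symdiff B C) * cl_sign B C"
proof -
  define inv :: "'n set \<Rightarrow> 'n set \<Rightarrow> ('n \<times> 'n) set"
    where "inv X Y = {(i, j). i \<in> X \<and> j \<in> Y \<and> j < i}" for X Y
  have sign: "cl_sign X Y = (-1) ^ card (inv X Y) * (-1) ^ card (X \<inter> Y)" for X Y
    unfolding cl_sign_def inv_def by (simp add: power_add)
  have "inv (symdiff X Y) Z = symdiff (inv X Z) (inv Y Z)"
    "inv X (symdiff Y Z) = symdiff (inv X Y) (inv X Z)"
    "symdiff X Y \<inter> Z = symdiff (X \<inter> Z) (Y \<inter> Z)" "X \<inter> symdiff Y Z = symdiff (X \<inter> Y) (X \<inter> Z)"
    for X Y Z unfolding inv_def symdiff_def by blast+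
  then show ?thesis unfolding sign by (simp add: neg_one_power_card_symdiff)
qed

lemma cl_mult_nth: "(a \<odot> b) $ C = (\<Sum>A\<in>UNIV. cl_sign A (symdiff A C) * a $ A * b $ symdiff A C)"
proof -
  have "(a \<odot> b) $ C = (\<Sum>A\<in>UNIV. \<Sum>B\<in>UNIV. if B = symdiff A C then cl_sign A B * a $ A * b $ B else 0)"
    unfolding cl_mult_def symdiff_def[symmetric] by (simp add: symdiff_eq_iff)
  then show ?thesis by (simp add: sum.delta')
qed

lemma bounded_bilinear_cl_mult: "bounded_bilinear ((\<odot>) :: 'n::{finite,linorder} cl \<Rightarrow> _)"
proof -
  have "bilinear ((\<odot>) :: 'n cl \<Rightarrow> _)"
    unfolding bilinear_def linear_iff
    by (auto simp: vec_eq_iff cl_mult_nth algebra_simps sum.distrib sum_distrib_left)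
  then show ?thesis by (simp add: bilinear_conv_bounded_bilinear)
qed

interpretation cl_mult: bounded_bilinear "(\<odot>) :: 'n::{finite,linorder} cl \<Rightarrow> _"
  by (rule bounded_bilinear_cl_mult)

lemma blade_nth: "blade A $ C = (if C = A then 1 else 0)"
  unfolding blade_def by simp

lemma cl_expansion: "a = (\<Sum>A\<in>UNIV. a $ A *\<^sub>R blade A)"
  unfolding vec_eq_iff
  by (simp add: blade_nth if_distrib sum.delta cong: if_cong)

lemma cl_mult_blade_left_nth: "(blade A \<odot> b) $ C = cl_sign A (symdiff A C) * b $ symdiff A C"
proof -
  have "(blade A \<odot> b) $ C = (\<Sum>X\<in>UNIV. if X = A then cl_sign A (symdiff A C) * b $ symdiff A C else 0)"
    unfolding cl_mult_nth by (intro sum.cong) (auto simp: blade_nth)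
  then show ?thesis by simp
qed

lemma blade_mult: "blade A \<odot> blade B = cl_sign A B *\<^sub>R blade (symdiff A B)"
  by (auto simp: vec_eq_iff cl_mult_blade_left_nth blade_nth symdiff_eq_iff)

lemma cl_mult_one_left [simp]: "blade {} \<odot> a = a"
  by (simp add: vec_eq_iff cl_mult_blade_left_nth cl_sign_def)

lemma cl_mult_assoc: "(a \<odot> b) \<odot> c = a \<odot> (b \<odot> (c :: 'n::{finite,linorder} cl))"
proof -
  have blades: "(blade A \<odot> blade B) \<odot> blade C = blade A \<odot> (blade B \<odot> (blade C :: 'n cl))" for A B C
    by (simp add: blade_mult cl_mult.scaleR_left cl_mult.scaleR_right symdiff_assoc cl_sign_cocycle
        mult.commute)
  have "(a \<odot> b) \<odot> c
      = ((\<Sum>A\<in>UNIV. a $ A *\<^sub>R blade A) \<odot> (\<Sum>B\<in>UNIV. b $ B *\<^sub>R blade B))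
        \<odot> (\<Sum>C\<in>UNIV. c $ C *\<^sub>R blade C)"
    by (simp only: cl_expansion[symmetric])
  also have "\<dots> = (\<Sum>A\<in>UNIV. a $ A *\<^sub>R blade A)
      \<odot> ((\<Sum>B\<in>UNIV. b $ B *\<^sub>R blade B) \<odot> (\<Sum>C\<in>UNIV. c $ C *\<^sub>R blade C))"
    by (simp only: cl_mult.sum_left cl_mult.sum_right cl_mult.scaleR_left cl_mult.scaleR_right
        blades)
  finally show ?thesis by (simp only: cl_expansion[symmetric])
qed

lemma bounded_linear_cl_vec: "bounded_linear (cl_vec :: real ^ 'n::{finite,linorder} \<Rightarrow> 'n cl)"
proof -
  have "linear (cl_vec :: real ^ 'n::{finite,linorder} \<Rightarrow> 'n cl)"
    unfolding linear_iff cl_vec_def by (simp add: scaleR_add_left sum.distrib scaleR_sum_right)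
  then show ?thesis by (simp add: linear_conv_bounded_linear)
qed

lemmas cl_vec_diff = linear_diff[OF bounded_linear.linear[OF bounded_linear_cl_vec]]
  and cl_vec_scaleR = linear_scale[OF bounded_linear.linear[OF bounded_linear_cl_vec]]

lemma cl_vec_axis: "cl_vec (axis i 1) = cl_e i"
proof -
  have "axis i 1 $ j *\<^sub>R cl_e j = (if j = i then cl_e i else 0)" for j
    by (simp add: axis_def)
  then show ?thesis by (simp add: cl_vec_def)
qed

lemma cl_e_mult:
  "cl_e i \<odot> cl_e j = (if i = j then - blade {} else if i < j then blade {i, j} else - blade {i, j})"
proof -
  have "{(k, l). k \<in> {i} \<and> l \<in> {j} \<and> l < k} = (if j < i then {(i, j)} else {})"
    "{i} \<inter> {j} = (if i = j then {i} else {})" by auto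
  then have "cl_sign {i} {j} = (if i = j then -1 else if i < j then 1 else -1)"
    unfolding cl_sign_def by auto
  moreover have "symdiff {i} {j} = (if i = j then {} else {i, j})"
    unfolding symdiff_def by auto
  ultimately show ?thesis unfolding cl_e_def blade_mult by simp
qed

lemma cl_vec_mult:
  "cl_vec p \<odot> cl_vec q = (- (p \<bullet> q)) *\<^sub>R blade {} +
     (\<Sum>i\<in>UNIV. \<Sum>j\<in>UNIV. if i < j then (p $ i * q $ j - p $ j * q $ i) *\<^sub>R blade {i, j} else 0)"
proof -
  define f where "f i j = (p $ i * q $ j) *\<^sub>R (cl_e i \<odot> cl_e j)" for i j
  have split: "f i j
      = (if i = j then f i j else 0) + (if i < j then f i j else 0) + (if j < i then f i j else 0)"
    for i j by (cases i j rule: linorder_cases) auto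
  have "cl_vec p \<odot> cl_vec q = (\<Sum>i\<in>UNIV. \<Sum>j\<in>UNIV. f i j)"
    by (simp add: f_def cl_vec_def cl_mult.sum_left cl_mult.sum_right cl_mult.scaleR_left
        cl_mult.scaleR_right scaleR_sum_right)
      (subst sum.swap, simp add: mult.commute)
  also have "\<dots> = (\<Sum>i\<in>UNIV. f i i) + (\<Sum>i\<in>UNIV. \<Sum>j\<in>UNIV. if i < j then f i j else 0)
      + (\<Sum>i\<in>UNIV. \<Sum>j\<in>UNIV. if j < i then f i j else 0)"
    by (subst split) (simp only: sum.distrib, simp add: sum.delta)
  also have "(\<Sum>i\<in>UNIV. \<Sum>j\<in>UNIV. if j < i then f i j else 0)
      = (\<Sum>i\<in>UNIV. \<Sum>j\<in>UNIV. if i < j then f j i else 0)"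
    by (rule sum.swap)
  also have "(\<Sum>i\<in>UNIV. f i i) = (- (p \<bullet> q)) *\<^sub>R blade {}"
    by (simp add: f_def cl_e_mult inner_vec_def scaleR_sum_left flip: sum_negf)
  finally have "cl_vec p \<odot> cl_vec q = (- (p \<bullet> q)) *\<^sub>R blade {} +
      ((\<Sum>i\<in>UNIV. \<Sum>j\<in>UNIV. if i < j then f i j else 0)
        + (\<Sum>i\<in>UNIV. \<Sum>j\<in>UNIV. if i < j then f j i else 0))"
    by (simp only: add.assoc)
  also have "(\<Sum>i\<in>UNIV. \<Sum>j\<in>UNIV. if i < j then f i j else 0)
        + (\<Sum>i\<in>UNIV. \<Sum>j\<in>UNIV. if i < j then f j i else 0)
      = (\<Sum>i\<in>UNIV. \<Sum>j\<in>UNIV. if i < j then (p $ i * q $ j - p $ j * q $ i) *\<^sub>R blade {i, j} else 0)"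
    unfolding sum.distrib[symmetric]
    by (intro sum.cong refl) (auto simp: f_def cl_e_mult insert_commute scaleR_diff_left)
  finally show ?thesis .
qed

lemma cl_e_mult_self: "cl_e i \<odot> cl_e i = - blade {}"
  by (simp add: cl_e_mult)

lemma cl_vec_mult_self: "cl_vec p \<odot> cl_vec p = (- (p \<bullet> p)) *\<^sub>R blade {}"
  unfolding cl_vec_mult by (simp add: sum.neutral mult.commute)

lemma cl_vec_mult_eqI:
  assumes "p \<bullet> q = p' \<bullet> q'"
    and "\<And>i j. i < j \<Longrightarrow> p $ i * q $ j - p $ j * q $ i = p' $ i * q' $ j - p' $ j * q' $ i"
  shows "cl_vec p \<odot> cl_vec q = cl_vec p' \<odot> cl_vec q'"
  unfolding cl_vec_mult using assms by (intro arg_cong2[where f = "(+)"] sum.cong) auto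

section \<open>The reflection and the operator Q'\<close>

lemma lastidx_max: "i \<le> (lastidx :: 'n::{finite,linorder})"
  unfolding lastidx_def by simp

lemma cl_mult_blade_right_nth: "(a \<odot> blade B) $ D = cl_sign (symdiff D B) B * a $ symdiff D B"
proof -
  have "symdiff A D = B \<longleftrightarrow> A = symdiff D B" for A
    unfolding symdiff_def by blast
  then have "(a \<odot> blade B) $ D
      = (\<Sum>A\<in>UNIV. if A = symdiff D B then cl_sign A (symdiff A D) * a $ A else 0)"
    unfolding cl_mult_nth blade_nth by (intro sum.cong) auto
  moreover have "symdiff (symdiff D B) D = B"
    unfolding symdiff_def by blast
  ultimately show ?thesis by simp
qed

lemma cl_Q_mult_e_last_nth: "(cl_Q a \<odot> cl_e lastidx) $ D = (if lastidx \<in> D then a $ D else 0)"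
proof (cases "lastidx \<in> D")
  case True
  then have "symdiff D {lastidx} = D - {lastidx}"
    unfolding symdiff_def by auto
  moreover have "cl_sign (D - {lastidx}) {lastidx} = 1"
  proof -
    have "{(i, j). i \<in> D - {lastidx} \<and> j \<in> {lastidx} \<and> j < i} = {}"
      "(D - {lastidx}) \<inter> {lastidx} = {}"
      using lastidx_max not_le by blast+
    then show ?thesis
      unfolding cl_sign_def by (simp only: card.empty add_0 power_0)
  qed
  ultimately show ?thesis
    using True by (simp add: cl_e_def cl_mult_blade_right_nth cl_Q_def insert_absorb)
next
  case False
  then have "symdiff D {lastidx} = insert lastidx D"
    unfolding symdiff_def by auto
  then show ?thesis
    using False by (simp add: cl_e_def cl_mult_blade_right_nth cl_Q_def)
qed

lemma cl_hat_nth: "cl_hat a $ D = (if lastidx \<in> D then - a $ D else a $ D)"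
  by (simp add: cl_hat_def cl_B_def cl_Q_mult_e_last_nth)

lemma cl_Q_mult_e_last: "cl_Q a \<odot> cl_e lastidx = (1/2) *\<^sub>R (a - cl_hat a)"
  by (simp add: vec_eq_iff cl_Q_mult_e_last_nth cl_hat_nth)

lemma cl_hat_cl_hat [simp]: "cl_hat (cl_hat a) = a"
  by (simp add: vec_eq_iff cl_hat_nth)

lemma bounded_linear_cl_hat: "bounded_linear (cl_hat :: 'n::{finite,linorder} cl \<Rightarrow> _)"
proof -
  have "linear (cl_hat :: 'n::{finite,linorder} cl \<Rightarrow> _)"
    unfolding linear_iff by (simp add: vec_eq_iff cl_hat_nth)
  then show ?thesis by (simp add: linear_conv_bounded_linear)
qed

lemmas cl_hat_diff = linear_diff[OF bounded_linear.linear[OF bounded_linear_cl_hat]]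

lemma cl_hat_mult:
  fixes a b :: "'n::{finite,linorder} cl"
  shows "cl_hat (a \<odot> b) = cl_hat a \<odot> cl_hat b"
proof -
  have hat: "cl_hat c $ D = (-1) ^ card (D \<inter> {lastidx}) * c $ D" for c and D :: "'n set"
    by (simp add: cl_hat_nth Int_insert_right)
  have "(-1::real) ^ card (D \<inter> {lastidx})
      = (-1) ^ card (A \<inter> {lastidx}) * (-1) ^ card (symdiff A D \<inter> {lastidx})"
    for A D :: "'n set"
  proof -
    have "D \<inter> {lastidx} = symdiff (A \<inter> {lastidx}) (symdiff A D \<inter> {lastidx})"
      unfolding symdiff_def by blast
    then show ?thesis by (simp add: neg_one_power_card_symdiff)
  qed
  then show ?thesis
    unfolding vec_eq_iff hat cl_mult_nth sum_distrib_left by (simp add: mult_ac)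
qed

lemma vhat_vhat [simp]: "vhat (vhat z) = z"
  by (simp add: vhat_def vec_eq_iff)

lemma vhat_diff: "vhat (a - b) = vhat a - vhat b"
  by (simp add: vhat_def vec_eq_iff)

lemma norm_vhat [simp]: "norm (vhat z) = norm z"
  unfolding norm_eq_sqrt_inner inner_vec_def vhat_def
  by (auto intro!: arg_cong[where f = sqrt] sum.cong)

lemma bounded_linear_vhat: "bounded_linear (vhat :: real ^ 'n::{finite,linorder} \<Rightarrow> _)"
proof -
  have "linear (vhat :: real ^ 'n::{finite,linorder} \<Rightarrow> _)"
    unfolding linear_iff vhat_def by (simp add: vec_eq_iff)
  then show ?thesis by (simp add: linear_conv_bounded_linear)
qed

lemma cl_hat_cl_vec: "cl_hat (cl_vec p) = cl_vec (vhat p)"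
proof -
  have hat_e: "cl_hat (cl_e i) = (if i = lastidx then - cl_e i else cl_e i)" for i
    by (simp add: vec_eq_iff cl_hat_nth cl_e_def blade_nth)
  have "cl_hat (cl_vec p) = (\<Sum>i\<in>UNIV. p $ i *\<^sub>R cl_hat (cl_e i))"
    by (simp add: cl_vec_def linear_sum[OF bounded_linear.linear[OF bounded_linear_cl_hat]]
        linear_scale[OF bounded_linear.linear[OF bounded_linear_cl_hat]])
  also have "\<dots> = cl_vec (vhat p)"
    unfolding cl_vec_def by (intro sum.cong refl) (simp add: hat_e vhat_def)
  finally show ?thesis .
qed

lemma cl_Q'_eq: "cl_Q' a = - ((1/2) *\<^sub>R (cl_e lastidx \<odot> (a - cl_hat a)))"
  by (simp add: cl_Q'_def cl_mult_assoc cl_Q_mult_e_last cl_mult.scaleR_right)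

lemma bounded_linear_cl_Q': "bounded_linear (cl_Q' :: 'n::{finite,linorder} cl \<Rightarrow> _)"
  unfolding cl_Q'_eq[abs_def]
  by (intro bounded_linear_minus bounded_linear_compose[OF bounded_linear_scaleR_right]
      bounded_linear_compose[OF cl_mult.bounded_linear_right] bounded_linear_sub
      bounded_linear_ident bounded_linear_cl_hat)

section \<open>Sphere inversion\<close>

definition sphere_inversion :: "'a::real_inner \<Rightarrow> 'a" where
  "sphere_inversion z = (1 / (z \<bullet> z)) *\<^sub>R z"

lemma inner_sphere_inversion_self: "sphere_inversion z \<bullet> sphere_inversion z = 1 / (z \<bullet> z)"
  by (simp add: sphere_inversion_def power2_eq_square)

definition sphere_inversion_deriv :: "'a::real_inner \<Rightarrow> 'a \<Rightarrow> 'a" where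
  "sphere_inversion_deriv z h = (1 / (z \<bullet> z)) *\<^sub>R h - (2 * (z \<bullet> h) / (z \<bullet> z)\<^sup>2) *\<^sub>R z"

lemma has_derivative_sphere_inversion:
  assumes "z \<noteq> 0"
  shows "(sphere_inversion has_derivative sphere_inversion_deriv z) (at z)"
  unfolding sphere_inversion_def[abs_def]
  using assms
  by (auto intro!: derivative_eq_intros ext
      simp: sphere_inversion_deriv_def inner_commute power2_eq_square field_simps)

lemma has_derivative_cl_vec_sphere_inversion:
  fixes y c :: "real ^ 'n::{finite,linorder}"
  assumes "y \<noteq> c"
  shows "((\<lambda>y. cl_vec (sphere_inversion (y - c))) has_derivative
    (\<lambda>h. cl_vec (sphere_inversion_deriv (y - c) h))) (at y)"
proof -
  have "((\<lambda>y. sphere_inversion (y - c)) has_derivative sphere_inversion_deriv (y - c)) (at y)"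
    using has_derivative_compose[OF has_derivative_diff[OF has_derivative_ident has_derivative_const]
        has_derivative_sphere_inversion[of "y - c"]] assms by simp
  then show ?thesis using bounded_linear.has_derivative[OF bounded_linear_cl_vec] by blast
qed

lemma dirac_sphere_inversion_deriv:
  fixes z :: "real ^ 'n::{finite,linorder}"
  assumes "z \<noteq> 0"
  shows "(\<Sum>j\<in>UNIV. cl_e j \<odot> cl_vec (sphere_inversion_deriv z (axis j 1)))
    = (- ((real CARD('n) - 2) / (z \<bullet> z))) *\<^sub>R blade {}"
proof -
  define R where "R = z \<bullet> z"
  have "R \<noteq> 0" using assms by (simp add: R_def)
  have "(\<Sum>j\<in>UNIV. cl_e j \<odot> cl_vec (sphere_inversion_deriv z (axis j 1)))
      = (\<Sum>j\<in>UNIV. (1 / R) *\<^sub>R (cl_e j \<odot> cl_e j) - (2 / R\<^sup>2) *\<^sub>R ((z $ j *\<^sub>R cl_e j) \<odot> cl_vec z))"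
    by (simp add: sphere_inversion_deriv_def R_def cl_vec_diff cl_vec_scaleR cl_vec_axis inner_axis
        cl_mult.diff_right cl_mult.scaleR_right cl_mult.scaleR_left)
  also have "\<dots> = (- (real CARD('n) / R)) *\<^sub>R blade {} - (2 / R\<^sup>2) *\<^sub>R (cl_vec z \<odot> cl_vec z)"
    by (simp add: cl_e_mult_self sum_subtractf cl_vec_def cl_mult.sum_left sum_constant_scaleR
        flip: scaleR_sum_right del: sum_constant)
  also have "\<dots> = (- (real CARD('n) / R) + 2 / R) *\<^sub>R blade {}"
    using \<open>R \<noteq> 0\<close>
    by (simp add: cl_vec_mult_self R_def[symmetric] power2_eq_square scaleR_add_left scaleR_diff_left)
  also have "- (real CARD('n) / R) + 2 / R = - ((real CARD('n) - 2) / R)"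
    using \<open>R \<noteq> 0\<close> by (simp add: field_simps)
  finally show ?thesis by (simp add: R_def)
qed

lemma inner_eq_of_agree_off_lastidx:
  fixes v w :: "real ^ 'n::{finite,linorder}"
  assumes "\<And>i. i \<noteq> lastidx \<Longrightarrow> v $ i = w $ i"
  shows "v \<bullet> u = v $ lastidx * u $ lastidx + (w \<bullet> u - w $ lastidx * u $ lastidx)"
proof -
  have "v \<bullet> u = v $ lastidx * u $ lastidx + (\<Sum>i\<in>UNIV - {lastidx}. v $ i * u $ i)"
    "w \<bullet> u = w $ lastidx * u $ lastidx + (\<Sum>i\<in>UNIV - {lastidx}. w $ i * u $ i)"
    unfolding inner_vec_def by (simp_all add: sum.remove[of UNIV lastidx])
  moreover have "(\<Sum>i\<in>UNIV - {lastidx}. v $ i * u $ i) = (\<Sum>i\<in>UNIV - {lastidx}. w $ i * u $ i)"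
    using assms by (intro sum.cong) auto
  ultimately show ?thesis by simp
qed

lemma cl_e_last_mult_sphere_inversions:
  fixes v w :: "real ^ 'n::{finite,linorder}"
  assumes same: "\<And>i. i \<noteq> lastidx \<Longrightarrow> v $ i = w $ i" and t: "v $ lastidx + w $ lastidx = 2 * t"
    and "w \<noteq> 0" "v \<noteq> 0"
  shows "cl_e lastidx \<odot> (cl_vec (sphere_inversion w) - cl_hat (cl_vec (sphere_inversion v)))
    = (2 * t) *\<^sub>R (cl_vec (sphere_inversion v) \<odot> cl_vec (sphere_inversion w))"
proof -
  define R S where "R = w \<bullet> w" and "S = v \<bullet> v"
  have "R \<noteq> 0" "S \<noteq> 0" using assms unfolding R_def S_def by simp_all
  have S: "S = v $ lastidx * v $ lastidx + (R - w $ lastidx * w $ lastidx)"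
    and vw: "v \<bullet> w = v $ lastidx * w $ lastidx + (R - w $ lastidx * w $ lastidx)"
    unfolding S_def R_def
    using inner_eq_of_agree_off_lastidx[OF same, of v] inner_eq_of_agree_off_lastidx[OF same, of w]
    by (simp_all add: inner_commute)
  have inner_id: "w $ lastidx / R + v $ lastidx / S = 2 * t / S * (1 / R) * (v \<bullet> w)"
  proof -
    have "w $ lastidx * S + v $ lastidx * R = (v $ lastidx + w $ lastidx) * (v \<bullet> w)"
      unfolding S vw by (simp add: algebra_simps)
    then show ?thesis using \<open>R \<noteq> 0\<close> \<open>S \<noteq> 0\<close> t by (simp add: field_simps)
  qed
  have wedge_id:
    "- (c / R - c / S) = 2 * t / S * c * (w $ lastidx / R) - 2 * t / S * v $ lastidx * (c / R)"
    for c
  proof -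
    have "- (c / R - c / S) = c * (R - S) / (R * S)"
      using \<open>R \<noteq> 0\<close> \<open>S \<noteq> 0\<close> by (simp add: field_simps)
    also have "c * (R - S) = (2 * t) * (c * (w $ lastidx - v $ lastidx))"
      unfolding S t[symmetric] by (simp add: algebra_simps)
    finally show ?thesis
      using \<open>R \<noteq> 0\<close> \<open>S \<noteq> 0\<close> by (simp add: field_simps)
  qed
  have "cl_vec (axis lastidx 1) \<odot> cl_vec (sphere_inversion w - vhat (sphere_inversion v))
      = cl_vec ((2 * t / S) *\<^sub>R v) \<odot> cl_vec ((1 / R) *\<^sub>R w)"
  proof (rule cl_vec_mult_eqI)
    show "axis lastidx 1 \<bullet> (sphere_inversion w - vhat (sphere_inversion v))
        = (2 * t / S) *\<^sub>R v \<bullet> (1 / R) *\<^sub>R w"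
      using inner_id by (simp add: sphere_inversion_def vhat_def inner_axis' R_def S_def)
    fix i j :: 'n assume "i < j"
    then have "i \<noteq> lastidx" using lastidx_max[of j] by auto
    then show "axis lastidx 1 $ i * (sphere_inversion w - vhat (sphere_inversion v)) $ j
        - axis lastidx 1 $ j * (sphere_inversion w - vhat (sphere_inversion v)) $ i
      = ((2 * t / S) *\<^sub>R v) $ i * ((1 / R) *\<^sub>R w) $ j - ((2 * t / S) *\<^sub>R v) $ j * ((1 / R) *\<^sub>R w) $ i"
      using same[of i] same[of j] wedge_id[of "w $ i"]
      by (cases "j = lastidx") (simp_all add: sphere_inversion_def vhat_def axis_def R_def S_def)
  qed
  also have "\<dots> = (2 * t) *\<^sub>R (cl_vec (sphere_inversion v) \<odot> cl_vec (sphere_inversion w))"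
    by (simp add: cl_vec_scaleR cl_mult.scaleR_left cl_mult.scaleR_right sphere_inversion_def
        R_def S_def)
  finally show ?thesis
    by (simp only: cl_hat_cl_vec cl_vec_axis cl_vec_diff)
qed

lemma kernel_clifford_identity:
  fixes a b A :: "'n::{finite,linorder} cl"
  defines "U \<equiv> a \<odot> A - b \<odot> cl_hat A"
  assumes ab: "cl_e lastidx \<odot> (a - cl_hat b) = (2 * t) *\<^sub>R (b \<odot> a)"
    and ba: "cl_e lastidx \<odot> (b - cl_hat a) = (2 * t) *\<^sub>R (a \<odot> b)"
    and aa: "a \<odot> a = (- (1 / R)) *\<^sub>R blade {}" and bb: "b \<odot> b = (- (1 / S)) *\<^sub>R blade {}"
  shows "cl_e lastidx \<odot> U + cl_Q' U - t *\<^sub>R ((a + b) \<odot> U) - (t / R) *\<^sub>R A + (t / S) *\<^sub>R cl_hat A = 0"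
proof -
  have "U + cl_hat U = (a - cl_hat b) \<odot> A - (b - cl_hat a) \<odot> cl_hat A"
    by (simp add: U_def cl_hat_diff cl_hat_mult cl_mult.diff_left algebra_simps)
  then have "cl_e lastidx \<odot> (U + cl_hat U)
      = (cl_e lastidx \<odot> (a - cl_hat b)) \<odot> A - (cl_e lastidx \<odot> (b - cl_hat a)) \<odot> cl_hat A"
    by (simp add: cl_mult.diff_left cl_mult.diff_right cl_mult_assoc)
  also have "\<dots> = (2 * t) *\<^sub>R (b \<odot> a \<odot> A) - (2 * t) *\<^sub>R (a \<odot> b \<odot> cl_hat A)"
    by (simp only: ab ba cl_mult.scaleR_left)
  finally have sum: "cl_e lastidx \<odot> (U + cl_hat U) = \<dots>" .
  have "cl_e lastidx \<odot> U + cl_Q' U = (1 / 2) *\<^sub>R (cl_e lastidx \<odot> (U + cl_hat U))"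
    by (simp add: cl_Q'_eq cl_mult.diff_right cl_mult.add_right algebra_simps)
  also have "\<dots> = t *\<^sub>R (b \<odot> a \<odot> A) - t *\<^sub>R (a \<odot> b \<odot> cl_hat A)"
    unfolding sum by (simp add: scaleR_diff_right)
  finally have en: "cl_e lastidx \<odot> U + cl_Q' U = \<dots>" .
  have ab_U: "(a + b) \<odot> U = (- (1 / R)) *\<^sub>R A - a \<odot> b \<odot> cl_hat A + b \<odot> a \<odot> A + (1 / S) *\<^sub>R cl_hat A"
    by (simp add: U_def cl_mult.add_left cl_mult.diff_right cl_mult_assoc[symmetric] aa bb
        cl_mult.scaleR_left cl_mult.diff_left algebra_simps)
  show ?thesis
    unfolding en ab_U by (simp add: algebra_simps)
qed

lemma has_derivative_norm_diff:
  fixes y c :: "'a::real_inner"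
  assumes "y \<noteq> c"
  shows "((\<lambda>y. norm (y - c)) has_derivative (\<lambda>h. ((y - c) \<bullet> h) / norm (y - c))) (at y)"
proof -
  have "((\<lambda>y. norm (y - c)) has_derivative (\<lambda>h. h \<bullet> sgn (y - c))) (at y)"
    using has_derivative_compose[OF has_derivative_diff[OF has_derivative_ident has_derivative_const]
        has_derivative_norm[of "y - c"]] assms by simp
  then show ?thesis
    by (simp add: sgn_div_norm inner_commute divide_inverse mult.commute del: scaleR_diff_right)
qed

lemma has_derivative_nth_power_div_norm_powers:
  fixes y c1 c2 :: "real ^ 'n::{finite,linorder}"
  assumes "y $ i \<noteq> 0" "y \<noteq> c1" "y \<noteq> c2"
  shows "((\<lambda>y. (y $ i) ^ m / (norm (y - c1) ^ m * norm (y - c2) ^ m)) has_derivative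
    (\<lambda>h. real m * ((y $ i) ^ m / (norm (y - c1) ^ m * norm (y - c2) ^ m)) *
       (h $ i / y $ i - sphere_inversion (y - c1) \<bullet> h - sphere_inversion (y - c2) \<bullet> h))) (at y)"
proof (cases m)
  case (Suc k)
  have n: "norm (y - c1) \<noteq> 0" "norm (y - c2) \<noteq> 0" using assms by auto
  have inv: "sphere_inversion (y - c) \<bullet> h = ((y - c) \<bullet> h) / norm (y - c) ^ 2" for c h
    by (simp add: sphere_inversion_def power2_norm_eq_inner)
  show ?thesis
    unfolding Suc inv
    apply (rule has_derivative_eq_rhs)
     apply (rule has_derivative_divide has_derivative_power has_derivative_mult
        bounded_linear_imp_has_derivative[OF bounded_linear_vec_nth] has_derivative_norm_diff assms)+
    using assms(1) n apply (simp add: Suc)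
    using assms(1) n apply (intro ext)
    apply (simp add: field_simps power2_eq_square)
    done
qed simp

lemma has_vector_derivative_line:
  assumes "(f has_derivative f') (at (y + t *\<^sub>R v))"
  shows "((\<lambda>t. f (y + t *\<^sub>R v)) has_vector_derivative f' v) (at t)"
proof -
  have "((\<lambda>t. y + t *\<^sub>R v) has_derivative (\<lambda>t. t *\<^sub>R v)) (at t)"
    by (auto intro!: derivative_eq_intros)
  from has_derivative_compose[OF this assms]
  have "((\<lambda>t. f (y + t *\<^sub>R v)) has_derivative (\<lambda>t. f' (t *\<^sub>R v))) (at t)" .
  then show ?thesis
    unfolding has_vector_derivative_def
    using linear_scale[OF has_derivative_linear[OF assms]] by simp
qed

lemma pdiff_eq_has_derivative:
  assumes "(f has_derivative f') (at y)"
  shows "pdiff j f y = f' (axis j 1)"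
proof -
  have "((\<lambda>t. f (y + t *\<^sub>R axis j 1)) has_vector_derivative f' (axis j 1)) (at 0)"
    using has_vector_derivative_line[where t = 0] assms by simp
  then show ?thesis unfolding pdiff_def by (rule vector_derivative_at)
qed

lemma dirac_hodge_eq_has_derivative:
  fixes f :: "real ^ 'n::{finite,linorder} \<Rightarrow> 'n cl"
  assumes "(f has_derivative f') (at y)"
  shows "DH f y = (\<Sum>j\<in>UNIV. cl_e j \<odot> f' (axis j 1))
    + ((real CARD('n) - 2) / (y $ lastidx)) *\<^sub>R cl_Q' (f y)"
  unfolding DH_def pdiff_eq_has_derivative[OF assms] ..

section \<open>The kernel\<close>

definition hm_kernel ::
    "real ^ ('n::{finite,linorder}) \<Rightarrow> 'n cl \<Rightarrow> real ^ ('n::{finite,linorder}) \<Rightarrow> 'n cl" where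
  "hm_kernel x A y = (y $ lastidx) ^ (CARD('n) - 2) *\<^sub>R (kerE x y \<odot> A - kerF x y \<odot> cl_hat A)"

definition hm_weight :: "real ^ ('n::{finite,linorder}) \<Rightarrow> real ^ ('n::{finite,linorder}) \<Rightarrow> real" where
  "hm_weight x y = (y $ lastidx) ^ (CARD('n) - 2) /
     (norm (y - x) ^ (CARD('n) - 2) * norm (y - vhat x) ^ (CARD('n) - 2))"

definition hm_factor ::
    "real ^ ('n::{finite,linorder}) \<Rightarrow> 'n cl \<Rightarrow> real ^ ('n::{finite,linorder}) \<Rightarrow> 'n cl" where
  "hm_factor x A y =
     cl_vec (sphere_inversion (y - x)) \<odot> A - cl_vec (sphere_inversion (y - vhat x)) \<odot> cl_hat A"

lemma cl_vinv_eq_sphere_inversion: "cl_vinv (x - y) = cl_vec (sphere_inversion (y - x))"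
  unfolding cl_vinv_def sphere_inversion_def
  by (simp add: power2_norm_eq_inner norm_minus_commute[of x y] algebra_simps
      flip: inner_minus_left inner_minus_right)

lemma hm_kernel_eq: "hm_kernel x A y = hm_weight x y *\<^sub>R hm_factor x A y"
proof -
  have "norm (x - vhat y) = norm (y - vhat x)"
    by (metis norm_minus_commute norm_vhat vhat_diff vhat_vhat)
  then show ?thesis
    unfolding hm_kernel_def hm_weight_def hm_factor_def kerE_def kerF_def cl_vinv_eq_sphere_inversion
    by (simp add: norm_minus_commute[of x y] norm_minus_commute[of "vhat x" y] cl_mult.scaleR_left
        algebra_simps)
qed

definition hm_kernel_deriv :: "real ^ ('n::{finite,linorder}) \<Rightarrow> 'n cl \<Rightarrow> real ^ ('n::{finite,linorder}) \<Rightarrow>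
    real ^ ('n::{finite,linorder}) \<Rightarrow> 'n cl" where
  "hm_kernel_deriv x A y h =
     hm_weight x y *\<^sub>R (cl_vec (sphere_inversion_deriv (y - x) h) \<odot> A
       - cl_vec (sphere_inversion_deriv (y - vhat x) h) \<odot> cl_hat A)
   + (real (CARD('n) - 2) * hm_weight x y *
       (h $ lastidx / y $ lastidx - sphere_inversion (y - x) \<bullet> h - sphere_inversion (y - vhat x) \<bullet> h))
     *\<^sub>R hm_factor x A y"

lemma has_derivative_hm_kernel:
  fixes x y :: "real ^ 'n::{finite,linorder}"
  assumes "y $ lastidx \<noteq> 0" "y \<noteq> x" "y \<noteq> vhat x"
  shows "(hm_kernel x A has_derivative hm_kernel_deriv x A y) (at y)"
proof -
  have "(hm_factor x A has_derivative (\<lambda>h. cl_vec (sphere_inversion_deriv (y - x) h) \<odot> A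
      - cl_vec (sphere_inversion_deriv (y - vhat x) h) \<odot> cl_hat A)) (at y)"
  proof -
    have "(hm_factor x A has_derivative (\<lambda>h.
        (cl_vec (sphere_inversion (y - x)) \<odot> 0 + cl_vec (sphere_inversion_deriv (y - x) h) \<odot> A)
      - (cl_vec (sphere_inversion (y - vhat x)) \<odot> 0
         + cl_vec (sphere_inversion_deriv (y - vhat x) h) \<odot> cl_hat A))) (at y)"
      unfolding hm_factor_def[abs_def]
      by (intro has_derivative_diff cl_mult.FDERIV has_derivative_cl_vec_sphere_inversion
          has_derivative_const assms)
    then show ?thesis by (simp add: cl_mult.zero_right)
  qed
  from has_derivative_scaleR
    [OF has_derivative_nth_power_div_norm_powers[OF assms, where m = "CARD('n) - 2"] this]
  show ?thesis
    unfolding hm_kernel_eq[abs_def] hm_kernel_deriv_def[abs_def] hm_weight_def[abs_def] .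
qed

text \<open>The hypothesis CARD('n) \<ge> 2 makes the natural-number exponent CARD('n) - 2 of the
  weight agree with the real coefficient of DH.\<close>

lemma dirac_hm_kernel_deriv:
  fixes x y :: "real ^ 'n::{finite,linorder}"
  assumes "CARD('n) \<ge> 2" "y \<noteq> x" "y \<noteq> vhat x"
  defines "m \<equiv> real CARD('n) - 2"
    and "a \<equiv> cl_vec (sphere_inversion (y - x))" and "b \<equiv> cl_vec (sphere_inversion (y - vhat x))"
  shows "(\<Sum>j\<in>UNIV. cl_e j \<odot> hm_kernel_deriv x A y (axis j 1))
    = hm_weight x y *\<^sub>R ((- (m / ((y - x) \<bullet> (y - x)))) *\<^sub>R A
        + (m / ((y - vhat x) \<bullet> (y - vhat x))) *\<^sub>R cl_hat A)
      + (m * hm_weight x y) *\<^sub>R (((1 / y $ lastidx) *\<^sub>R cl_e lastidx - a - b) \<odot> hm_factor x A y)"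
proof -
  have "(\<Sum>j\<in>UNIV. cl_e j \<odot> (cl_vec (sphere_inversion_deriv (y - x) (axis j 1)) \<odot> A
        - cl_vec (sphere_inversion_deriv (y - vhat x) (axis j 1)) \<odot> cl_hat A))
      = (- (m / ((y - x) \<bullet> (y - x)))) *\<^sub>R A + (m / ((y - vhat x) \<bullet> (y - vhat x))) *\<^sub>R cl_hat A"
    using dirac_sphere_inversion_deriv[of "y - x"] dirac_sphere_inversion_deriv[of "y - vhat x"] assms
    by (simp add: m_def cl_mult.diff_right sum_subtractf cl_mult_assoc[symmetric]
        flip: cl_mult.sum_left) (simp add: cl_mult.minus_left cl_mult.scaleR_left)
  moreover have "(\<Sum>j\<in>UNIV. (axis j 1 $ lastidx / y $ lastidx - sphere_inversion (y - x) \<bullet> axis j 1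
        - sphere_inversion (y - vhat x) \<bullet> axis j 1) *\<^sub>R (cl_e j \<odot> U))
      = ((1 / y $ lastidx) *\<^sub>R cl_e lastidx - a - b) \<odot> U" for U
  proof -
    have "(\<Sum>j\<in>UNIV. (axis j 1 $ lastidx / y $ lastidx - sphere_inversion (y - x) \<bullet> axis j 1
        - sphere_inversion (y - vhat x) \<bullet> axis j 1) *\<^sub>R cl_e j)
      = cl_vec ((1 / y $ lastidx) *\<^sub>R axis lastidx 1 - sphere_inversion (y - x)
          - sphere_inversion (y - vhat x))"
      unfolding cl_vec_def by (intro sum.cong refl) (simp add: inner_axis, simp add: axis_def)
    also have "\<dots> = (1 / y $ lastidx) *\<^sub>R cl_e lastidx - a - b"
      by (simp add: a_def b_def cl_vec_diff cl_vec_scaleR cl_vec_axis)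
    finally show ?thesis
      by (simp only: flip: cl_mult.scaleR_left cl_mult.sum_left)
  qed
  ultimately show ?thesis
    using assms(1)
    by (simp add: hm_kernel_deriv_def cl_mult.add_right cl_mult.scaleR_right sum.distrib
        of_nat_diff m_def flip: scaleR_sum_right scaleR_scaleR)
qed

lemma cl_Q'_hm_factor:
  fixes x y :: "real ^ 'n::{finite,linorder}"
  assumes "y \<noteq> x" "y \<noteq> vhat x"
  defines "a \<equiv> cl_vec (sphere_inversion (y - x))" and "b \<equiv> cl_vec (sphere_inversion (y - vhat x))"
  shows "cl_Q' (hm_factor x A y) = (y $ lastidx) *\<^sub>R ((a + b) \<odot> hm_factor x A y)
    + (y $ lastidx / ((y - x) \<bullet> (y - x))) *\<^sub>R A
    - (y $ lastidx / ((y - vhat x) \<bullet> (y - vhat x))) *\<^sub>R cl_hat A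
    - cl_e lastidx \<odot> hm_factor x A y"
proof -
  define w v where "w = y - x" and "v = y - vhat x"
  have "w \<noteq> 0" "v \<noteq> 0"
    using assms by (simp_all add: w_def v_def)
  have same: "v $ i = w $ i" if "i \<noteq> lastidx" for i
    using that by (simp add: v_def w_def vhat_def)
  have last: "v $ lastidx + w $ lastidx = 2 * y $ lastidx"
    by (simp add: v_def w_def vhat_def)
  have "cl_e lastidx \<odot> hm_factor x A y + cl_Q' (hm_factor x A y)
      - (y $ lastidx) *\<^sub>R ((a + b) \<odot> hm_factor x A y)
      - (y $ lastidx / (w \<bullet> w)) *\<^sub>R A + (y $ lastidx / (v \<bullet> v)) *\<^sub>R cl_hat A = 0"
    unfolding hm_factor_def a_def b_def w_def[symmetric] v_def[symmetric]
    by (rule kernel_clifford_identity)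
      (simp_all add: cl_vec_mult_self inner_sphere_inversion_self cl_e_last_mult_sphere_inversions
        same last \<open>w \<noteq> 0\<close> \<open>v \<noteq> 0\<close> add.commute)
  then show ?thesis by (simp add: w_def v_def algebra_simps)
qed

lemma dirac_hodge_hm_kernel:
  fixes x y :: "real ^ 'n::{finite,linorder}"
  assumes "CARD('n) \<ge> 2" and y: "y $ lastidx \<noteq> 0" "y \<noteq> x" "y \<noteq> vhat x"
  shows "DH (hm_kernel x A) y = 0"
proof -
  define t m where "t = y $ lastidx" and "m = real CARD('n) - 2"
  define R S where "R = (y - x) \<bullet> (y - x)" and "S = (y - vhat x) \<bullet> (y - vhat x)"
  define a b
    where "a = cl_vec (sphere_inversion (y - x))" and "b = cl_vec (sphere_inversion (y - vhat x))"
  define \<phi> U where "\<phi> = hm_weight x y" and "U = hm_factor x A y"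
  have "DH (hm_kernel x A) y
      = \<phi> *\<^sub>R ((- (m / R)) *\<^sub>R A + (m / S) *\<^sub>R cl_hat A)
        + (m * \<phi>) *\<^sub>R (((1 / t) *\<^sub>R cl_e lastidx - a - b) \<odot> U)
        + (m * \<phi> / t) *\<^sub>R (t *\<^sub>R ((a + b) \<odot> U) + (t / R) *\<^sub>R A - (t / S) *\<^sub>R cl_hat A
            - cl_e lastidx \<odot> U)"
    unfolding dirac_hodge_eq_has_derivative[OF has_derivative_hm_kernel[OF y]]
      dirac_hm_kernel_deriv[OF assms(1) y(2,3)]
    by (simp add: hm_kernel_eq linear_scale[OF bounded_linear.linear[OF bounded_linear_cl_Q']]
        cl_Q'_hm_factor[OF y(2,3)] t_def m_def R_def S_def a_def b_def \<phi>_def U_def)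
  also have "\<dots> = 0"
    using y(1) by (simp add: t_def cl_mult.diff_left cl_mult.add_left cl_mult.scaleR_left algebra_simps)
  finally show ?thesis .
qed

lemmas continuous_on_cl_mult [continuous_intros] = cl_mult.continuous_on
  and continuous_on_cl_vec [continuous_intros] = bounded_linear.continuous_on[OF bounded_linear_cl_vec]
  and continuous_on_cl_hat [continuous_intros] = bounded_linear.continuous_on[OF bounded_linear_cl_hat]
  and continuous_on_vhat [continuous_intros] = bounded_linear.continuous_on[OF bounded_linear_vhat]

lemma continuous_on_kernels:
  fixes L :: "real ^ 'n::{finite,linorder} \<Rightarrow> 'n cl"
  assumes L: "continuous_on C L" and apart: "\<And>x. x \<in> C \<Longrightarrow> y \<noteq> x \<and> y \<noteq> vhat x"
  shows "continuous_on C (\<lambda>x. kerE x y \<odot> L x)" and "continuous_on C (\<lambda>x. kerF x y \<odot> cl_hat (L x))"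
proof -
  have "x - y \<noteq> 0 \<and> x - vhat y \<noteq> 0 \<and> vhat x - y \<noteq> 0" if "x \<in> C" for x
    using apart[OF that] by (metis eq_iff_diff_eq_0 vhat_vhat)
  then show "continuous_on C (\<lambda>x. kerE x y \<odot> L x)" and "continuous_on C (\<lambda>x. kerF x y \<odot> cl_hat (L x))"
    unfolding kerE_def kerF_def cl_vinv_def
    by (auto intro!: continuous_intros L)
qed

lemma continuous_on_hm_kernel:
  fixes L :: "real ^ 'n::{finite,linorder} \<Rightarrow> 'n cl"
  assumes L: "continuous_on C L" and apart: "\<And>y x. y \<in> S \<Longrightarrow> x \<in> C \<Longrightarrow> y \<noteq> x \<and> y \<noteq> vhat x"
  shows "continuous_on (S \<times> C) (\<lambda>(y, x). hm_kernel x (L x) y)"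
proof -
  have "continuous_on (S \<times> C) (\<lambda>p. L (snd p))"
    by (rule continuous_on_compose2[OF L continuous_on_snd[OF continuous_on_id]]) auto
  moreover have "fst p - snd p \<noteq> 0 \<and> fst p - vhat (snd p) \<noteq> 0" if "p \<in> S \<times> C" for p
    using apart[of "fst p" "snd p"] that by (auto simp: mem_Times_iff)
  ultimately show ?thesis
    unfolding case_prod_unfold hm_kernel_eq hm_weight_def hm_factor_def sphere_inversion_def
    by (auto intro!: continuous_intros)
qed

lemma continuous_on_hm_kernel_deriv:
  fixes L :: "real ^ 'n::{finite,linorder} \<Rightarrow> 'n cl"
  assumes L: "continuous_on C L"
    and apart: "\<And>y x. y \<in> S \<Longrightarrow> x \<in> C \<Longrightarrow> y $ lastidx \<noteq> 0 \<and> y \<noteq> x \<and> y \<noteq> vhat x"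
  shows "continuous_on (S \<times> C) (\<lambda>(y, x). hm_kernel_deriv x (L x) y h)"
proof -
  have "continuous_on (S \<times> C) (\<lambda>p. L (snd p))"
    by (rule continuous_on_compose2[OF L continuous_on_snd[OF continuous_on_id]]) auto
  moreover have "fst p $ lastidx \<noteq> 0 \<and> fst p - snd p \<noteq> 0 \<and> fst p - vhat (snd p) \<noteq> 0"
    if "p \<in> S \<times> C" for p
    using apart[of "fst p" "snd p"] that by (auto simp: mem_Times_iff)
  ultimately show ?thesis
    unfolding case_prod_unfold hm_kernel_deriv_def hm_weight_def hm_factor_def sphere_inversion_def
      sphere_inversion_deriv_def
    by (auto intro!: continuous_intros)
qed

section \<open>Integrals depending on a parameter\<close>

lemma set_integrable_continuous_on:
  fixes f :: "'a::euclidean_space \<Rightarrow> 'b::{banach, second_countable_topology}"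
  assumes "compact C" "K \<subseteq> C" "K \<in> sets lborel" "continuous_on C f"
  shows "set_integrable lborel K f"
  using set_integrable_subset[of lborel C f K] borel_integrable_compact[OF assms(1,4)] assms(2,3)
  unfolding set_integrable_def by blast

lemma set_integrable_continuous_on_slice:
  fixes f :: "'p::topological_space \<Rightarrow> 'a::euclidean_space \<Rightarrow> 'b::{banach, second_countable_topology}"
  assumes "compact C" "K \<subseteq> C" "K \<in> sets lborel"
    and "continuous_on (U \<times> C) (\<lambda>(y, x). f y x)" "y \<in> U"
  shows "set_integrable lborel K (f y)"
proof -
  have "continuous_on C (\<lambda>x. (y, x))"
    by (intro continuous_intros)
  from continuous_on_compose2[OF assms(4) this] assms(5) have "continuous_on C (f y)"
    by auto
  with assms(1-3) show ?thesis by (rule set_integrable_continuous_on)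
qed

lemma norm_set_integral_le_measure:
  fixes f :: "'a \<Rightarrow> 'b::{banach, second_countable_topology}"
  assumes "set_integrable M K f" "K \<in> sets M" "emeasure M K < \<infinity>"
    and "\<And>x. x \<in> K \<Longrightarrow> norm (f x) \<le> B"
  shows "norm (LINT x:K|M. f x) \<le> B * measure M K"
proof -
  have "norm (LINT x:K|M. f x) \<le> (LINT x:K|M. norm (f x))"
    using assms(1) by (rule set_integral_norm_bound)
  also have "\<dots> \<le> (LINT x:K|M. B)"
    using assms by (intro set_integral_mono set_integrable_norm) (auto simp: set_integrable_def)
  also have "\<dots> = B * measure M K"
    using assms(2,3) by (simp add: set_integral_const)
  finally show ?thesis .
qed

lemma set_integral_bounded_linear:
  fixes f :: "'a \<Rightarrow> 'b::{banach, second_countable_topology}"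
    and T :: "'b \<Rightarrow> 'c::{banach, second_countable_topology}"
  assumes T: "bounded_linear T" and f: "set_integrable M K f"
  shows "set_integrable M K (\<lambda>x. T (f x))" and "(LINT x:K|M. T (f x)) = T (LINT x:K|M. f x)"
proof -
  have "(\<lambda>x. indicator K x *\<^sub>R T (f x)) = (\<lambda>x. T (indicator K x *\<^sub>R f x))"
    by (simp add: linear_scale[OF bounded_linear.linear[OF T]])
  with integrable_bounded_linear[OF T] integral_bounded_linear[OF T] f
  show "set_integrable M K (\<lambda>x. T (f x))" and "(LINT x:K|M. T (f x)) = T (LINT x:K|M. f x)"
    unfolding set_integrable_def set_lebesgue_integral_def by simp_all
qed

lemma set_integral_sum:
  fixes f :: "'i \<Rightarrow> 'a \<Rightarrow> 'b::{banach, second_countable_topology}"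
  assumes "\<And>i. i \<in> I \<Longrightarrow> set_integrable M K (f i)"
  shows "set_integrable M K (\<lambda>x. \<Sum>i\<in>I. f i x)"
    and "(LINT x:K|M. (\<Sum>i\<in>I. f i x)) = (\<Sum>i\<in>I. LINT x:K|M. f i x)"
  using assms unfolding set_lebesgue_integral_def set_integrable_def
  by (simp_all add: scaleR_sum_right integral_sum)

lemma continuous_on_set_integral_param:
  fixes f :: "'p::topological_space \<Rightarrow> 'a::euclidean_space \<Rightarrow> 'b::{banach, second_countable_topology}"
  assumes C: "compact C" "K \<subseteq> C" "K \<in> sets lborel"
    and cont: "continuous_on (U \<times> C) (\<lambda>(y, x). f y x)"
  shows "continuous_on U (\<lambda>y. LINT x:K|lborel. f y x)"
  unfolding continuous_on_def
proof (intro strip tendstoI)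
  fix y0 and \<epsilon> :: real
  assume "y0 \<in> U" "\<epsilon> > 0"
  define M where "M = measure lborel K"
  have "M \<ge> 0" "emeasure lborel K < \<infinity>"
    using emeasure_bounded_finite[OF bounded_subset[OF compact_imp_bounded[OF C(1)] C(2)]]
    by (auto simp: M_def)
  have integrable: "set_integrable lborel K (f y)" if "y \<in> U" for y
    using C cont that by (rule set_integrable_continuous_on_slice)
  have "\<epsilon> / (M + 1) > 0"
    using \<open>\<epsilon> > 0\<close> \<open>M \<ge> 0\<close> by simp
  from continuous_on_prod_compactE[OF cont C(1) \<open>y0 \<in> U\<close> this]
  obtain X0 where "y0 \<in> X0" "open X0"
    and close: "\<forall>y\<in>X0 \<inter> U. \<forall>x\<in>C. dist (f y x) (f y0 x) \<le> \<epsilon> / (M + 1)"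
    by (simp only: case_prod_conv) blast
  have "\<forall>\<^sub>F y in at y0 within U. y \<in> X0 \<inter> U"
    using \<open>y0 \<in> X0\<close> \<open>open X0\<close> by (auto simp: eventually_at_topological)
  then show "\<forall>\<^sub>F y in at y0 within U. dist (LINT x:K|lborel. f y x) (LINT x:K|lborel. f y0 x) < \<epsilon>"
  proof eventually_elim
    case (elim y)
    have "dist (LINT x:K|lborel. f y x) (LINT x:K|lborel. f y0 x)
        = norm (LINT x:K|lborel. f y x - f y0 x)"
      using elim \<open>y0 \<in> U\<close> by (simp add: dist_norm set_integral_diff integrable)
    also have "\<dots> \<le> \<epsilon> / (M + 1) * measure lborel K"
      using elim \<open>y0 \<in> U\<close> close C \<open>emeasure lborel K < \<infinity>\<close>
      by (intro norm_set_integral_le_measure set_integral_diff integrable) (auto simp: dist_norm)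
    also have "\<dots> < \<epsilon>"
      using \<open>\<epsilon> > 0\<close> \<open>M \<ge> 0\<close> by (simp add: M_def[symmetric] field_simps)
    finally show ?case .
  qed
qed

lemma uniform_linearization_vector_derivative:
  fixes f f' :: "real \<Rightarrow> 'a::topological_space \<Rightarrow> 'b::real_normed_vector"
  assumes "compact C" "open U" "s \<in> U" "e > 0"
    and der: "\<And>s x. s \<in> U \<Longrightarrow> x \<in> C \<Longrightarrow> ((\<lambda>s. f s x) has_vector_derivative f' s x) (at s)"
    and cont': "continuous_on (U \<times> C) (\<lambda>(s, x). f' s x)"
  obtains r where "r > 0" "\<And>\<sigma>. norm (\<sigma> - s) < r \<Longrightarrow> \<sigma> \<in> U"
    and "\<And>\<sigma> x. norm (\<sigma> - s) < r \<Longrightarrow> x \<in> C \<Longrightarrow>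
      norm (f \<sigma> x - f s x - (\<sigma> - s) *\<^sub>R f' s x) \<le> norm (\<sigma> - s) * e"
proof -
  from continuous_on_prod_compactE[OF cont' assms(1,3,4)]
  obtain X0 where "s \<in> X0" "open X0" and close: "\<forall>\<sigma>\<in>X0 \<inter> U. \<forall>x\<in>C. dist (f' \<sigma> x) (f' s x) \<le> e"
    by (simp only: case_prod_conv) blast
  obtain r where "r > 0" and ball: "ball s r \<subseteq> X0 \<inter> U"
    using open_contains_ball_eq[of "X0 \<inter> U"] \<open>open X0\<close> assms(2,3) \<open>s \<in> X0\<close> by blast
  show ?thesis
  proof
    show "\<sigma> \<in> U" if "norm (\<sigma> - s) < r" for \<sigma>
      using that ball by (auto simp: dist_norm norm_minus_commute)
    fix \<sigma> x
    assume "norm (\<sigma> - s) < r" "x \<in> C"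
    have deriv: "((\<lambda>\<sigma>. f \<sigma> x) has_vector_derivative f' \<tau> x) (at \<tau> within ball s r)"
      if "\<tau> \<in> ball s r" for \<tau>
    proof -
      have "\<tau> \<in> U" using that ball by blast
      from der[OF this \<open>x \<in> C\<close>] show ?thesis by (rule has_vector_derivative_at_within)
    qed
    have segment: "closed_segment s \<sigma> \<subseteq> ball s r"
      using \<open>norm (\<sigma> - s) < r\<close> \<open>r > 0\<close>
      by (intro closed_segment_subset) (auto simp: dist_norm norm_minus_commute)
    have bound: "norm (f' \<tau> x - f' s x) \<le> e" if "\<tau> \<in> ball s r" for \<tau>
      using that ball close \<open>x \<in> C\<close> by (simp add: dist_norm subset_iff)
    show "norm (f \<sigma> x - f s x - (\<sigma> - s) *\<^sub>R f' s x) \<le> norm (\<sigma> - s) * e"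
      using vector_differentiable_bound_linearization[OF deriv segment bound] \<open>r > 0\<close> by simp
  qed (rule \<open>r > 0\<close>)
qed

lemma has_vector_derivative_set_integral_param:
  fixes f f' :: "real \<Rightarrow> 'a::euclidean_space \<Rightarrow> 'b::{banach, second_countable_topology}"
  assumes C: "compact C" "K \<subseteq> C" "K \<in> sets lborel" and U: "open U" "s \<in> U"
    and cont: "continuous_on (U \<times> C) (\<lambda>(s, x). f s x)"
    and der: "\<And>s x. s \<in> U \<Longrightarrow> x \<in> C \<Longrightarrow> ((\<lambda>s. f s x) has_vector_derivative f' s x) (at s)"
    and cont': "continuous_on (U \<times> C) (\<lambda>(s, x). f' s x)"
  shows "((\<lambda>s. LINT x:K|lborel. f s x) has_vector_derivative (LINT x:K|lborel. f' s x)) (at s)"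
  unfolding has_vector_derivative_def has_derivative_at_alt
proof (intro conjI allI impI bounded_linear_scaleR_left)
  fix \<epsilon> :: real
  assume "\<epsilon> > 0"
  define M where "M = measure lborel K"
  have "M \<ge> 0" "emeasure lborel K < \<infinity>"
    using emeasure_bounded_finite[OF bounded_subset[OF compact_imp_bounded[OF C(1)] C(2)]]
    by (auto simp: M_def)
  then have "\<epsilon> / (M + 1) > 0"
    using \<open>\<epsilon> > 0\<close> by simp
  with uniform_linearization_vector_derivative[OF C(1) U _ der cont']
  obtain r where "r > 0" and inU: "\<And>\<sigma>. norm (\<sigma> - s) < r \<Longrightarrow> \<sigma> \<in> U"
    and pointwise: "\<And>\<sigma> x. norm (\<sigma> - s) < r \<Longrightarrow> x \<in> C \<Longrightarrow>
      norm (f \<sigma> x - f s x - (\<sigma> - s) *\<^sub>R f' s x) \<le> norm (\<sigma> - s) * (\<epsilon> / (M + 1))"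
    by blast
  show "\<exists>d>0. \<forall>\<sigma>. norm (\<sigma> - s) < d \<longrightarrow>
      norm ((LINT x:K|lborel. f \<sigma> x) - (LINT x:K|lborel. f s x) - (\<sigma> - s) *\<^sub>R (LINT x:K|lborel. f' s x))
        \<le> \<epsilon> * norm (\<sigma> - s)"
  proof (intro exI[of _ r] conjI allI impI \<open>r > 0\<close>)
    fix \<sigma> :: real
    assume "norm (\<sigma> - s) < r"
    show "norm ((LINT x:K|lborel. f \<sigma> x) - (LINT x:K|lborel. f s x)
        - (\<sigma> - s) *\<^sub>R (LINT x:K|lborel. f' s x)) \<le> \<epsilon> * norm (\<sigma> - s)" (is "norm ?D \<le> _")
    proof -
      have "set_integrable lborel K (f \<sigma>)" "set_integrable lborel K (f s)"
        "set_integrable lborel K (f' s)"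
        using set_integrable_continuous_on_slice[OF C cont inU[OF \<open>norm (\<sigma> - s) < r\<close>]]
          set_integrable_continuous_on_slice[OF C cont U(2)]
          set_integrable_continuous_on_slice[OF C cont' U(2)] .
      then have diff: "set_integrable lborel K (\<lambda>x. f \<sigma> x - f s x - (\<sigma> - s) *\<^sub>R f' s x)"
        and "?D = (LINT x:K|lborel. f \<sigma> x - f s x - (\<sigma> - s) *\<^sub>R f' s x)"
        by (simp_all add: set_integral_diff)
      then have "norm ?D \<le> norm (\<sigma> - s) * (\<epsilon> / (M + 1)) * measure lborel K"
        using C pointwise[OF \<open>norm (\<sigma> - s) < r\<close>] \<open>emeasure lborel K < \<infinity>\<close>
        by (simp only:) (intro norm_set_integral_le_measure[OF diff]; auto)
      also have "\<dots> \<le> \<epsilon> * norm (\<sigma> - s)"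
        using \<open>\<epsilon> > 0\<close> \<open>M \<ge> 0\<close> by (simp add: M_def[symmetric] field_simps)
      finally show ?thesis .
    qed
  qed
qed

lemma has_vector_derivative_set_integral_line:
  fixes G :: "'p::euclidean_space \<Rightarrow> 'a::euclidean_space \<Rightarrow> 'b::{banach, second_countable_topology}"
  assumes C: "compact C" "K \<subseteq> C" "K \<in> sets lborel" and S: "open S" "y \<in> S"
    and cont: "continuous_on (S \<times> C) (\<lambda>(y, x). G y x)"
    and der: "\<And>y x. y \<in> S \<Longrightarrow> x \<in> C \<Longrightarrow> ((\<lambda>y. G y x) has_derivative G' y x) (at y)"
    and cont': "continuous_on (S \<times> C) (\<lambda>(y, x). G' y x v)"
  shows "((\<lambda>t. LINT x:K|lborel. G (y + t *\<^sub>R v) x) has_vector_derivative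
    (LINT x:K|lborel. G' y x v)) (at 0)"
proof -
  define T where "T = (\<lambda>t. y + t *\<^sub>R v) -` S"
  have "open T"
    unfolding T_def by (rule continuous_open_vimage[OF S(1)]) (auto intro: continuous_intros)
  have line: "continuous_on (T \<times> C) (\<lambda>(t, x). (y + t *\<^sub>R v, x))"
    and maps: "(\<lambda>(t, x). (y + t *\<^sub>R v, x)) ` (T \<times> C) \<subseteq> S \<times> C"
    by (auto simp: T_def case_prod_unfold intro!: continuous_intros)
  have "((\<lambda>t. LINT x:K|lborel. G (y + t *\<^sub>R v) x) has_vector_derivative
      (LINT x:K|lborel. G' (y + 0 *\<^sub>R v) x v)) (at 0)"
  proof (rule has_vector_derivative_set_integral_param[OF C \<open>open T\<close>])
    show "0 \<in> T" using S(2) by (simp add: T_def)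
    show "continuous_on (T \<times> C) (\<lambda>(t, x). G (y + t *\<^sub>R v) x)"
      using continuous_on_compose2[OF cont line maps] by (simp add: case_prod_unfold)
    show "continuous_on (T \<times> C) (\<lambda>(t, x). G' (y + t *\<^sub>R v) x v)"
      using continuous_on_compose2[OF cont' line maps] by (simp add: case_prod_unfold)
    show "((\<lambda>t. G (y + t *\<^sub>R v) x) has_vector_derivative G' (y + t *\<^sub>R v) x v) (at t)"
      if "t \<in> T" "x \<in> C" for t x
      using that by (intro has_vector_derivative_line der) (simp add: T_def)
  qed
  then show ?thesis by simp
qed

lemma Ck_on_1_set_integral:
  fixes I :: "real ^ 'n::finite \<Rightarrow> 'b::{banach, second_countable_topology}"
    and G :: "real ^ 'n \<Rightarrow> 'a::euclidean_space \<Rightarrow> 'b"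
  assumes C: "compact C" "K \<subseteq> C" "K \<in> sets lborel" and S: "open S"
    and I: "\<And>y. y \<in> S \<Longrightarrow> I y = (LINT x:K|lborel. G y x)"
    and cont: "continuous_on (S \<times> C) (\<lambda>(y, x). G y x)"
    and der: "\<And>y x. y \<in> S \<Longrightarrow> x \<in> C \<Longrightarrow> ((\<lambda>y. G y x) has_derivative G' y x) (at y)"
    and cont': "\<And>h. continuous_on (S \<times> C) (\<lambda>(y, x). G' y x h)"
  shows "Ck_on 1 S I"
    and pdiff_set_integral: "\<And>y j. y \<in> S \<Longrightarrow> pdiff j I y = (LINT x:K|lborel. G' y x (axis j 1))"
proof -
  have partial: "((\<lambda>t. I (y + t *\<^sub>R axis j 1)) has_vector_derivative
      (LINT x:K|lborel. G' y x (axis j 1))) (at 0)" if "y \<in> S" for y j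
  proof (rule has_vector_derivative_transform_within_open)
    show "((\<lambda>t. LINT x:K|lborel. G (y + t *\<^sub>R axis j 1) x) has_vector_derivative
        (LINT x:K|lborel. G' y x (axis j 1))) (at 0)"
      using C S that cont der cont' by (rule has_vector_derivative_set_integral_line)
    show "open ((\<lambda>t. y + t *\<^sub>R axis j 1) -` S)"
      by (rule continuous_open_vimage[OF S]) (auto intro: continuous_intros)
  qed (use that I in auto)
  then show pdiff: "pdiff j I y = (LINT x:K|lborel. G' y x (axis j 1))" if "y \<in> S" for y j
    unfolding pdiff_def using that by (blast intro: vector_derivative_at)
  have "continuous_on S I"
    using continuous_on_set_integral_param[OF C cont] by (rule continuous_on_eq) (simp add: I)
  moreover have "continuous_on S (pdiff j I)" for j
    using continuous_on_set_integral_param[OF C cont'] by (rule continuous_on_eq) (simp add: pdiff)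
  moreover have "has_partials_on I S"
    unfolding has_partials_on_def using partial by (blast intro: differentiableI_vector)
  ultimately show "Ck_on 1 S I" by simp
qed

lemma hypermonogenic_on_set_integral:
  fixes I :: "real ^ 'n::{finite,linorder} \<Rightarrow> 'n cl"
    and G :: "real ^ 'n::{finite,linorder} \<Rightarrow> 'a::euclidean_space \<Rightarrow> 'n cl"
  assumes C: "compact C" "K \<subseteq> C" "K \<in> sets lborel" and S: "open S"
    and I: "\<And>y. y \<in> S \<Longrightarrow> I y = (LINT x:K|lborel. G y x)"
    and cont: "continuous_on (S \<times> C) (\<lambda>(y, x). G y x)"
    and der: "\<And>y x. y \<in> S \<Longrightarrow> x \<in> C \<Longrightarrow> ((\<lambda>y. G y x) has_derivative G' y x) (at y)"
    and cont': "\<And>h. continuous_on (S \<times> C) (\<lambda>(y, x). G' y x h)"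
    and hm: "\<And>y x. y \<in> S \<Longrightarrow> x \<in> C \<Longrightarrow> DH (\<lambda>y. G y x) y = 0"
  shows "hypermonogenic_on S I"
  unfolding hypermonogenic_on_def
proof (intro conjI ballI Ck_on_1_set_integral[OF assms(1-8)])
  fix y assume "y \<in> S"
  define c where "c = (real CARD('n) - 2) / (y $ lastidx)"
  note integrable = set_integrable_continuous_on_slice[OF C _ \<open>y \<in> S\<close>]
  have "DH I y = (\<Sum>j\<in>UNIV. cl_e j \<odot> (LINT x:K|lborel. G' y x (axis j 1)))
      + c *\<^sub>R cl_Q' (LINT x:K|lborel. G y x)"
    unfolding DH_def c_def using pdiff_set_integral[OF assms(1-8) \<open>y \<in> S\<close>] \<open>y \<in> S\<close> I by simp
  also have "\<dots> = (LINT x:K|lborel. (\<Sum>j\<in>UNIV. cl_e j \<odot> G' y x (axis j 1)) + c *\<^sub>R cl_Q' (G y x))"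
    using set_integral_bounded_linear[OF cl_mult.bounded_linear_right integrable[OF cont']]
      set_integral_bounded_linear[OF bounded_linear_cl_Q' integrable[OF cont]]
    by (simp add: set_integral_sum set_integral_add)
  also have "\<dots> = (LINT x:K|lborel. 0)"
    using C(2) \<open>y \<in> S\<close>
    by (intro set_lebesgue_integral_cong C(3))
      (auto simp: c_def hm[symmetric] dirac_hodge_eq_has_derivative[OF der])
  finally show "DH I y = 0" by simp
qed

lemma set_integral_hm_kernel:
  fixes L :: "real ^ 'n::{finite,linorder} \<Rightarrow> 'n cl"
  assumes C: "compact C" "K \<subseteq> C" "K \<in> sets lborel" and L: "continuous_on C L"
    and apart: "\<And>x. x \<in> C \<Longrightarrow> y \<noteq> x \<and> y \<noteq> vhat x"
  shows "(y $ lastidx) ^ (CARD('n) - 2) *\<^sub>R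
      ((LINT x:K|lborel. kerE x y \<odot> L x) - (LINT x:K|lborel. kerF x y \<odot> cl_hat (L x)))
    = (LINT x:K|lborel. hm_kernel x (L x) y)"
  using set_integrable_continuous_on[OF C continuous_on_kernels(1)[OF L apart]]
    set_integrable_continuous_on[OF C continuous_on_kernels(2)[OF L apart]]
  by (simp add: hm_kernel_def set_integral_diff)

theorem theorem13:
  fixes K :: "(real ^ ('n::{finite,linorder})) set"
    and L :: "real ^ ('n::{finite,linorder}) \<Rightarrow> 'n cl"
  assumes "CARD('n) > 2"
    and "open K" and "connected K" and "K \<noteq> {}" and "bounded K"
    and "smooth_boundary K"
    and "closure K \<subseteq> upper_half"
    and "C1_closure K L"
  shows "hypermonogenic_on (upper_half - closure K)
           (\<lambda>y. (y $ lastidx) ^ (CARD('n) - 2) *\<^sub>R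
                ((LINT x:K|lborel. kerE x y \<odot> L x) - (LINT x:K|lborel. kerF x y \<odot> cl_hat (L x))))"
proof (rule hypermonogenic_on_set_integral)
  show C: "compact (closure K)" "K \<subseteq> closure K" "K \<in> sets lborel"
    using assms(2,5) by (simp_all add: compact_closure closure_subset)
  show "open (upper_half - closure K)"
    unfolding upper_half_def by (intro open_Diff open_Collect_less continuous_intros) auto
  have L: "continuous_on (closure K) L"
    using assms(8) by (simp add: C1_closure_def)
  have apart: "y $ lastidx \<noteq> 0 \<and> y \<noteq> x \<and> y \<noteq> vhat x"
    if "y \<in> upper_half - closure K" "x \<in> closure K" for x y
    using that assms(7) by (force simp: upper_half_def vhat_def)
  show "continuous_on ((upper_half - closure K) \<times> closure K) (\<lambda>(y, x). hm_kernel x (L x) y)"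
    using L apart by (intro continuous_on_hm_kernel) auto
  show "continuous_on ((upper_half - closure K) \<times> closure K)
      (\<lambda>(y, x). hm_kernel_deriv x (L x) y h)" for h
    using L apart by (intro continuous_on_hm_kernel_deriv) auto
  fix y assume y: "y \<in> upper_half - closure K"
  then show "(y $ lastidx) ^ (CARD('n) - 2) *\<^sub>R
      ((LINT x:K|lborel. kerE x y \<odot> L x) - (LINT x:K|lborel. kerF x y \<odot> cl_hat (L x)))
    = (LINT x:K|lborel. hm_kernel x (L x) y)"
    using apart by (intro set_integral_hm_kernel[OF C L]) auto
  fix x assume x: "x \<in> closure K"
  show "(hm_kernel x (L x) has_derivative hm_kernel_deriv x (L x) y) (at y)"
    using apart[OF y x] by (intro has_derivative_hm_kernel) auto
  show "DH (hm_kernel x (L x)) y = 0"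
    using apart[OF y x] assms(1) by (intro dirac_hodge_hm_kernel) auto
qed

end
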